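(* Let $G=(V,E)$ be a $k$-uniform cored hypergraph ($k\ge3$) and let $\mathbf x\in\mathbb R^n$ be an H-eigenvector of its Laplacian tensor $\mathcal L$ corresponding to the H-eigenvalue $\lambda(\mathcal L)$. For each $e\in E$ let $i_e\in e$ be a cored vertex. Then $\prod_{s\in e}x_s\le 0$ for all $e\in E$ when $k$ is even, and $\prod_{s\in e\setminus\{i_e\}}x_s\le0$ for all $e\in E$ when $k$ is odd.
   Context: A $k$-uniform hypergraph $G=(V,E)$ has $V=[n]$ and a nonempty set $E$ of $k$-element subsets of $V$; $d_i$ is the number of edges containing $i$. A cored vertex is a vertex of degree one; $G$ is cored if every edge contains a cored vertex. The Laplacian tensor $\mathcal L=\mathcal D-\mathcal A$ ($\mathcal D$ diagonal with entries $d_i$, $\mathcal A$ with entries $\frac1{(k-1)!}$ at index tuples forming an edge and $0$ otherwise) satisfies $(\mathcal L\mathbf x^{k-1})_i=d_ix_i^{k-1}-\sum_{e\in E,\,i\in e}\prod_{s\in e\setminus\{i\}}x_s$. A real $\lambda$ is an H-eigenvalue with H-eigenvector $\mathbf x\neq0$ if $(\mathcal L\mathbf x^{k-1})_i=\lambda x_i^{k-1}$ for all $i$; $\lambda(\mathcal L)$ is the largest H-eigenvalue. *)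

theory Defs
  imports Complex_Main
begin

definition k_uniform_hypergraph :: "nat \<Rightarrow> nat \<Rightarrow> nat set set \<Rightarrow> bool" where
  "k_uniform_hypergraph n k E \<longleftrightarrow> E \<noteq> {} \<and> (\<forall>e\<in>E. e \<subseteq> {1..n} \<and> card e = k)"

definition hdeg :: "nat set set \<Rightarrow> nat \<Rightarrow> nat" where
  "hdeg E i = card {e\<in>E. i \<in> e}"

definition cored_vertex :: "nat set set \<Rightarrow> nat \<Rightarrow> bool" where
  "cored_vertex E i \<longleftrightarrow> hdeg E i = 1"

definition cored :: "nat set set \<Rightarrow> bool" where
  "cored E \<longleftrightarrow> (\<forall>e\<in>E. \<exists>i\<in>e. cored_vertex E i)"

text \<open>(L x^{k-1})_i for the Laplacian tensor L = D - A.\<close>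
definition lap_apply :: "nat \<Rightarrow> nat set set \<Rightarrow> (nat \<Rightarrow> real) \<Rightarrow> nat \<Rightarrow> real" where
  "lap_apply k E x i = real (hdeg E i) * x i ^ (k - 1)
      - (\<Sum>e\<in>{e\<in>E. i \<in> e}. \<Prod>s\<in>e - {i}. x s)"

text \<open>Vectors in R^n are functions nat => real; only the entries 1..n matter.\<close>
definition H_eigenpair :: "nat \<Rightarrow> nat \<Rightarrow> nat set set \<Rightarrow> real \<Rightarrow> (nat \<Rightarrow> real) \<Rightarrow> bool" where
  "H_eigenpair n k E lam x \<longleftrightarrow> (\<exists>i\<in>{1..n}. x i \<noteq> 0) \<and>
     (\<forall>i\<in>{1..n}. lap_apply k E x i = lam * x i ^ (k - 1))"

definition largest_H_eigenvalue :: "nat \<Rightarrow> nat \<Rightarrow> nat set set \<Rightarrow> real" where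
  "largest_H_eigenvalue n k E = Sup {lam. \<exists>x. H_eigenpair n k E lam x}"

end

theory Submission
  imports Defs
begin

text \<open>At a cored vertex i, lying in the single edge e, the eigen-equation reads
  x_i^{k-1} - \<Prod>_{e - {i}} x = \<lambda> x_i^{k-1}, i.e. \<Prod>_{e - {i}} x = (1 - \<lambda>) x_i^{k-1}.
  The unit vector at a cored vertex is an H-eigenvector for 1 (for k \<ge> 3 every product over
  e - {j} still contains a zero entry), and H-eigenvalues are bounded, so \<lambda>(L) \<ge> 1.
  Hence \<Prod>_{e - {i}} x has the sign of -x_i^{k-1}: for odd k the power is even, and for
  even k multiplying by x_i gives -(\<lambda> - 1) x_i^k \<le> 0.\<close>

lemma k_uniform_hypergraph_finite_edges:
  assumes "k_uniform_hypergraph n k E"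
  shows "finite E"
proof -
  have "E \<subseteq> Pow {1..n}" using assms unfolding k_uniform_hypergraph_def by auto
  thus ?thesis by (rule finite_subset) simp
qed

lemma k_uniform_hypergraph_edge:
  assumes "k_uniform_hypergraph n k E" and "e \<in> E"
  shows "e \<subseteq> {1..n}" and "finite e" and "card e = k"
  using assms finite_subset[of e "{1..n}"] unfolding k_uniform_hypergraph_def by auto

lemma card_edge_remove_vertex:
  assumes "k_uniform_hypergraph n k E" and "e \<in> E" and "i \<in> e"
  shows "card (e - {i}) = k - 1"
  using assms k_uniform_hypergraph_edge[OF assms(1,2)] by simp

text \<open>Evaluate the eigen-equation at a coordinate i of maximal modulus M:
  |\<lambda>| M^{k-1} \<le> d_i M^{k-1} + d_i M^{k-1}.\<close>

lemma H_eigenvalue_abs_le: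
  assumes hg: "k_uniform_hypergraph n k E" and ep: "H_eigenpair n k E lam y"
  shows "\<bar>lam\<bar> \<le> 2 * real (card E)"
proof -
  let ?I = "{1..n::nat}"
  obtain j where j: "j \<in> ?I" "y j \<noteq> 0" using ep unfolding H_eigenpair_def by auto
  define M where "M = Max ((\<lambda>j. \<bar>y j\<bar>) ` ?I)"
  have "M \<in> (\<lambda>j. \<bar>y j\<bar>) ` ?I" unfolding M_def using j(1) by (intro Max_in) auto
  then obtain i where i: "i \<in> ?I" "\<bar>y i\<bar> = M" by auto
  have M_ge: "\<bar>y s\<bar> \<le> M" if "s \<in> ?I" for s unfolding M_def using that by (intro Max_ge) auto
  have "M ^ (k - 1) > 0" using M_ge[OF j(1)] j(2) by simp
  define D where "D = {e\<in>E. i \<in> e}"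
  have card_D: "card D \<le> card E"
    unfolding D_def using k_uniform_hypergraph_finite_edges[OF hg] by (intro card_mono) auto
  have prod_le: "\<bar>\<Prod>s\<in>e - {i}. y s\<bar> \<le> M ^ (k - 1)" if "e \<in> D" for e
  proof -
    have e: "e \<in> E" "i \<in> e" using that unfolding D_def by auto
    have "\<bar>\<Prod>s\<in>e - {i}. y s\<bar> = (\<Prod>s\<in>e - {i}. \<bar>y s\<bar>)" by (rule abs_prod)
    also have "\<dots> \<le> (\<Prod>s\<in>e - {i}. M)"
      using k_uniform_hypergraph_edge(1)[OF hg e(1)] M_ge by (intro prod_mono) auto
    also have "\<dots> = M ^ (k - 1)" using card_edge_remove_vertex[OF hg e] by simp
    finally show ?thesis .
  qed
  have sum_le: "\<bar>\<Sum>e\<in>D. \<Prod>s\<in>e - {i}. y s\<bar> \<le> real (card D) * M ^ (k - 1)"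
  proof -
    have "\<bar>\<Sum>e\<in>D. \<Prod>s\<in>e - {i}. y s\<bar> \<le> (\<Sum>e\<in>D. \<bar>\<Prod>s\<in>e - {i}. y s\<bar>)" by (rule sum_abs)
    also have "\<dots> \<le> (\<Sum>e\<in>D. M ^ (k - 1))" using prod_le by (intro sum_mono)
    finally show ?thesis by simp
  qed
  have eq: "real (card D) * y i ^ (k - 1) - (\<Sum>e\<in>D. \<Prod>s\<in>e - {i}. y s) = lam * y i ^ (k - 1)"
    using ep i(1) unfolding H_eigenpair_def lap_apply_def D_def hdeg_def by auto
  have "\<bar>lam\<bar> * M ^ (k - 1) = \<bar>lam * y i ^ (k - 1)\<bar>" using i(2) by (simp add: abs_mult power_abs)
  also have "\<dots> \<le> \<bar>real (card D) * y i ^ (k - 1)\<bar> + \<bar>\<Sum>e\<in>D. \<Prod>s\<in>e - {i}. y s\<bar>"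
    unfolding eq[symmetric] by (rule abs_triangle_ineq4)
  also have "\<dots> \<le> (2 * real (card D)) * M ^ (k - 1)"
    using sum_le i(2) by (simp add: abs_mult power_abs)
  finally have "\<bar>lam\<bar> \<le> 2 * real (card D)" using \<open>M ^ (k - 1) > 0\<close> by simp
  thus ?thesis using card_D by linarith
qed

lemma H_eigenvalues_bdd_above:
  assumes "k_uniform_hypergraph n k E"
  shows "bdd_above {lam. \<exists>x. H_eigenpair n k E lam x}"
  using H_eigenvalue_abs_le[OF assms]
  by (intro bdd_aboveI[where M = "2 * real (card E)"]) (auto dest: abs_le_D1)

lemma H_eigenpair_unit_vector_cored_vertex:
  assumes k3: "k \<ge> 3" and hg: "k_uniform_hypergraph n k E"
    and "e0 \<in> E" "i0 \<in> e0" and cv: "cored_vertex E i0"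
  shows "H_eigenpair n k E 1 (\<lambda>s. if s = i0 then 1 else 0)"
proof -
  let ?x = "(\<lambda>s. if s = i0 then 1 else 0) :: nat \<Rightarrow> real"
  have "i0 \<in> {1..n}" using k_uniform_hypergraph_edge(1)[OF hg \<open>e0 \<in> E\<close>] \<open>i0 \<in> e0\<close> by auto
  have prod_zero: "(\<Prod>s\<in>e - {i}. ?x s) = 0" if "e \<in> E" "i \<in> e" for e i
  proof -
    have "card (e - {i}) = k - 1" using card_edge_remove_vertex[OF hg that] .
    hence "card (e - {i} - {i0}) > 0"
      using k3 card_Diff_singleton_if[of "e - {i}" i0] by (cases "i0 \<in> e - {i}") auto
    then obtain s where "s \<in> e - {i}" "s \<noteq> i0" by (auto simp: card_gt_0_iff)
    thus ?thesis using k_uniform_hypergraph_edge(2)[OF hg that(1)] by (intro prod_zero) auto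
  qed
  have "(\<Sum>e\<in>{e\<in>E. i \<in> e}. \<Prod>s\<in>e - {i}. ?x s) = 0" for i
    using prod_zero by (intro sum.neutral) auto
  moreover have "real (hdeg E i0) = 1" using cv unfolding cored_vertex_def by simp
  ultimately have "lap_apply k E ?x i = 1 * ?x i ^ (k - 1)" for i
    using k3 unfolding lap_apply_def by auto
  thus ?thesis using \<open>i0 \<in> {1..n}\<close> unfolding H_eigenpair_def by auto
qed

lemma largest_H_eigenvalue_ge_one:
  assumes "k \<ge> 3" and hg: "k_uniform_hypergraph n k E" and "cored E"
  shows "largest_H_eigenvalue n k E \<ge> 1"
proof -
  obtain e0 where "e0 \<in> E" using hg unfolding k_uniform_hypergraph_def by auto
  then obtain i0 where "i0 \<in> e0" "cored_vertex E i0" using \<open>cored E\<close> unfolding cored_def by auto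
  have "1 \<in> {lam. \<exists>x. H_eigenpair n k E lam x}"
    using H_eigenpair_unit_vector_cored_vertex[OF assms(1,2) \<open>e0 \<in> E\<close> \<open>i0 \<in> e0\<close>
          \<open>cored_vertex E i0\<close>] by blast
  thus ?thesis
    unfolding largest_H_eigenvalue_def using H_eigenvalues_bdd_above[OF hg] by (rule cSup_upper)
qed

lemma H_eigenpair_cored_vertex_eq:
  assumes hg: "k_uniform_hypergraph n k E" and ep: "H_eigenpair n k E lam x"
    and "e \<in> E" "i \<in> e" and cv: "cored_vertex E i"
  shows "(\<Prod>s\<in>e - {i}. x s) = (1 - lam) * x i ^ (k - 1)"
proof -
  have "card {e\<in>E. i \<in> e} = 1" using cv unfolding cored_vertex_def hdeg_def .
  then obtain a where "{e\<in>E. i \<in> e} = {a}" by (auto simp: card_Suc_eq)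
  hence star: "{e\<in>E. i \<in> e} = {e}" using \<open>e \<in> E\<close> \<open>i \<in> e\<close> by auto
  have "i \<in> {1..n}" using k_uniform_hypergraph_edge(1)[OF hg \<open>e \<in> E\<close>] \<open>i \<in> e\<close> by auto
  hence "lap_apply k E x i = lam * x i ^ (k - 1)" using ep unfolding H_eigenpair_def by auto
  thus ?thesis using cv unfolding lap_apply_def star cored_vertex_def by (simp add: algebra_simps)
qed

theorem proposition3p1:
  fixes n k :: nat and E :: "nat set set" and x :: "nat \<Rightarrow> real"
    and ie :: "nat set \<Rightarrow> nat"
  assumes "k \<ge> 3"
    and "k_uniform_hypergraph n k E"
    and "cored E"
    and "H_eigenpair n k E (largest_H_eigenvalue n k E) x"
    and "\<forall>e\<in>E. ie e \<in> e \<and> cored_vertex E (ie e)"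
  shows "(even k \<longrightarrow> (\<forall>e\<in>E. (\<Prod>s\<in>e. x s) \<le> 0)) \<and>
         (odd k \<longrightarrow> (\<forall>e\<in>E. (\<Prod>s\<in>e - {ie e}. x s) \<le> 0))"
proof -
  let ?lam = "largest_H_eigenvalue n k E"
  have lam_ge: "?lam \<ge> 1" using largest_H_eigenvalue_ge_one[OF assms(1-3)] .
  have core_eq: "(\<Prod>s\<in>e - {ie e}. x s) = (1 - ?lam) * x (ie e) ^ (k - 1)" if "e \<in> E" for e
    using H_eigenpair_cored_vertex_eq[OF assms(2,4) that] assms(5) that by auto
  show ?thesis
  proof (intro conjI impI ballI)
    fix e assume "even k" "e \<in> E"
    have "(\<Prod>s\<in>e. x s) = x (ie e) * (\<Prod>s\<in>e - {ie e}. x s)"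
      using k_uniform_hypergraph_edge(2)[OF assms(2) \<open>e \<in> E\<close>] assms(5) \<open>e \<in> E\<close>
      by (intro prod.remove) auto
    also have "\<dots> = (1 - ?lam) * (x (ie e) * x (ie e) ^ (k - 1))"
      using core_eq[OF \<open>e \<in> E\<close>] by simp
    also have "\<dots> = (1 - ?lam) * x (ie e) ^ k"
      using assms(1) by (simp add: power_eq_if)
    also have "\<dots> \<le> 0" using lam_ge \<open>even k\<close> by (intro mult_nonpos_nonneg) auto
    finally show "(\<Prod>s\<in>e. x s) \<le> 0" .
  next
    fix e assume "odd k" "e \<in> E"
    have "x (ie e) ^ (k - 1) \<ge> 0" using \<open>odd k\<close> assms(1) by (simp add: zero_le_even_power)
    thus "(\<Prod>s\<in>e - {ie e}. x s) \<le> 0" using core_eq[OF \<open>e \<in> E\<close>] lam_ge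
      by (simp add: mult_nonpos_nonneg)
  qed
qed

end
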